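(* Consider the miners' game with $n\ge2$ miners, parameters $R>0$, $N>0$, unit prices $\lambda_1,\dots,\lambda_n>0$, where miner $s_i$ chooses $\mu_i\ge0$ and receives profit $P_i=\frac{\mu_i}{\sum_{j=1}^n\mu_j}RN-\lambda_i\mu_i$ (the fraction being $0$ if $\sum_j\mu_j=0$). Relabel the miners so that $\lambda_1\le\lambda_2\le\dots\le\lambda_n$. Define $q$ as follows: start with $S'=\{s_1,s_2\}$ and $q=2$; while $q<n$ and $\lambda_{q+1}<\frac{\sum_{s_i\in S'}\lambda_i}{|S'|-1}$, add $s_{q+1}$ to $S'$ and increase $q$ by $1$. Let $\Lambda=\sum_{i=1}^q\lambda_i$ and define $$\mu_i^*=\frac{RN(q-1)}{\Lambda}\left(1-\frac{(q-1)\lambda_i}{\Lambda}\right)\ \text{for } i\le q,\qquad \mu_i^*=0\ \text{for } i>q.$$ Then $(\mu_1^*,\dots,\mu_n^* )$ is a Nash equilibrium of the miners' game.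
   Context: A Nash equilibrium is a profile $(\mu_1^*,\dots,\mu_n^* )$ with all $\mu_i^*\ge 0$ such that no miner $s_i$ can strictly increase $P_i$ by unilaterally changing $\mu_i^*$ to another value $\mu_i\ge0$. *)

theory Defs
  imports Complex_Main
begin

text \<open>Miners are indexed by 1..n; a strategy profile is a function mu :: nat => real
 (only values on {1..n} matter).\<close>

definition profit :: "nat \<Rightarrow> real \<Rightarrow> real \<Rightarrow> (nat \<Rightarrow> real) \<Rightarrow> (nat \<Rightarrow> real) \<Rightarrow> nat \<Rightarrow> real" where
  "profit n R N lam mu i =
     (let S = (\<Sum>j=1..n. mu j) in (if S = 0 then 0 else mu i / S) * R * N - lam i * mu i)"

definition nash_equilibrium :: "nat \<Rightarrow> real \<Rightarrow> real \<Rightarrow> (nat \<Rightarrow> real) \<Rightarrow> (nat \<Rightarrow> real) \<Rightarrow> bool" where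
  "nash_equilibrium n R N lam mu \<longleftrightarrow>
     (\<forall>i\<in>{1..n}. mu i \<ge> 0) \<and>
     (\<forall>i\<in>{1..n}. \<forall>m::real. m \<ge> 0 \<longrightarrow> profit n R N lam (mu(i := m)) i \<le> profit n R N lam mu i)"

function q_loop :: "nat \<Rightarrow> (nat \<Rightarrow> real) \<Rightarrow> nat \<Rightarrow> nat" where
  "q_loop n lam q =
     (if q < n \<and> lam (q + 1) < (\<Sum>i=1..q. lam i) / (real q - 1)
      then q_loop n lam (q + 1) else q)"
  by auto
termination by (relation "measure (\<lambda>(n, lam, q). n - q)") auto

definition q_of :: "nat \<Rightarrow> (nat \<Rightarrow> real) \<Rightarrow> nat" where
  "q_of n lam = q_loop n lam 2"

definition mu_star :: "nat \<Rightarrow> real \<Rightarrow> real \<Rightarrow> (nat \<Rightarrow> real) \<Rightarrow> nat \<Rightarrow> real" where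
  "mu_star n R N lam i =
     (let q = q_of n lam; L = (\<Sum>j=1..q. lam j) in
      if i \<le> q then R * N * (real q - 1) / L * (1 - (real q - 1) * lam i / L) else 0)"

end

theory Submission
  imports Defs
begin

(* Against a total stake T > 0 of the other miners, a miner with price l and reward A = R N
   earns m/(T+m) A - l m, a concave function of m: it is maximised at the root mu of
   A T = l (T+mu)^2 when that root is nonnegative, and at 0 when A <= l T.
   The profile mu* has total stake c = R N (q-1)/Lambda, so the rivals of an active miner i stake
   c (q-1) lam_i/Lambda, which is exactly that first-order condition. The last step the loop
   accepts gives (q-1) lam_q < Lambda, hence positive shares for the active miners, and the
   stopping rule Lambda <= (q-1) lam_(q+1) makes entering unprofitable for every inactive miner. *)

definition share_payoff :: "real \<Rightarrow> real \<Rightarrow> real \<Rightarrow> real \<Rightarrow> real" where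
  "share_payoff A l T m = m / (T + m) * A - l * m"

lemma share_payoff_le_at_first_order_point:
  assumes "0 < T" "0 \<le> l" "0 \<le> \<mu>" "0 \<le> m" and foc: "A * T = l * (T + \<mu>)\<^sup>2"
  shows "share_payoff A l T m \<le> share_payoff A l T \<mu>"
proof -
  have A: "A = l * (T + \<mu>)\<^sup>2 / T"
    using \<open>0 < T\<close> foc by (simp add: field_simps)
  have "share_payoff A l T \<mu> - share_payoff A l T m = l * (m - \<mu>)\<^sup>2 / (T + m)"
    unfolding share_payoff_def A using assms(1,3,4)
    by (simp add: divide_simps power2_eq_square) (simp add: algebra_simps)
  moreover have "0 \<le> l * (m - \<mu>)\<^sup>2 / (T + m)"
    using assms by simp
  ultimately show ?thesis by linarith
qed

lemma share_payoff_nonpos: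
  assumes "0 < T" "0 \<le> l" "0 \<le> m" and "A \<le> l * T"
  shows "share_payoff A l T m \<le> 0"
proof -
  have "m / (T + m) * A \<le> m / (T + m) * (l * T)"
    using assms by (intro mult_left_mono) auto
  also have "\<dots> = l * m * (T / (T + m))" by simp
  also have "\<dots> \<le> l * m"
    using assms by (intro mult_left_le) auto
  finally show ?thesis unfolding share_payoff_def by simp
qed

lemma sum_fun_upd:
  fixes f :: "'a \<Rightarrow> 'b::ab_group_add"
  assumes "finite A" "i \<in> A"
  shows "sum (f(i := x)) A = sum f A - f i + x"
proof -
  have "sum (f(i := x)) A = x + sum f (A - {i})"
    using assms by (simp add: sum.remove)
  then show ?thesis
    using assms by (simp add: sum_diff1)
qed

lemma profit_fun_upd:
  assumes "i \<in> {1..n}" "0 < (\<Sum>j=1..n. \<mu> j) - \<mu> i" "0 \<le> m"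
  shows "profit n R N lam (\<mu>(i := m)) i = share_payoff (R * N) (lam i) ((\<Sum>j=1..n. \<mu> j) - \<mu> i) m"
proof -
  have "(\<Sum>j=1..n. (\<mu>(i := m)) j) = (\<Sum>j=1..n. \<mu> j) - \<mu> i + m"
    using assms(1) by (rule sum_fun_upd[OF finite_atLeastAtMost])
  then show ?thesis
    using assms(2,3) by (simp add: profit_def share_payoff_def Let_def)
qed

lemma nash_equilibriumI_first_order:
  assumes nonneg: "\<And>i. i \<in> {1..n} \<Longrightarrow> 0 \<le> \<mu> i"
    and lam_nonneg: "\<And>i. i \<in> {1..n} \<Longrightarrow> 0 \<le> lam i"
    and rivals_pos: "\<And>i. i \<in> {1..n} \<Longrightarrow> 0 < (\<Sum>j=1..n. \<mu> j) - \<mu> i"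
    and best_response: "\<And>i. i \<in> {1..n} \<Longrightarrow>
      R * N * ((\<Sum>j=1..n. \<mu> j) - \<mu> i) = lam i * (\<Sum>j=1..n. \<mu> j)\<^sup>2 \<or>
      \<mu> i = 0 \<and> R * N \<le> lam i * (\<Sum>j=1..n. \<mu> j)"
  shows "nash_equilibrium n R N lam \<mu>"
  unfolding nash_equilibrium_def
proof (intro conjI ballI allI impI)
  fix i and m :: real
  assume i: "i \<in> {1..n}" and m: "0 \<le> m"
  define T where "T = (\<Sum>j=1..n. \<mu> j) - \<mu> i"
  have T: "0 < T" "T + \<mu> i = (\<Sum>j=1..n. \<mu> j)"
    using rivals_pos[OF i] by (simp_all add: T_def)
  have "profit n R N lam (\<mu>(i := m)) i = share_payoff (R * N) (lam i) T m"
    using profit_fun_upd[OF i rivals_pos[OF i] m] by (simp add: T_def)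
  also have "\<dots> \<le> share_payoff (R * N) (lam i) T (\<mu> i)"
    using best_response[OF i]
  proof
    assume "R * N * ((\<Sum>j=1..n. \<mu> j) - \<mu> i) = lam i * (\<Sum>j=1..n. \<mu> j)\<^sup>2"
    then show ?thesis
      using T lam_nonneg[OF i] nonneg[OF i] m
      by (intro share_payoff_le_at_first_order_point) (simp_all add: T_def)
  next
    assume "\<mu> i = 0 \<and> R * N \<le> lam i * (\<Sum>j=1..n. \<mu> j)"
    then show ?thesis
      using T lam_nonneg[OF i] m share_payoff_nonpos[of T "lam i" m "R * N"]
      by (simp add: T_def share_payoff_def)
  qed
  also have "\<dots> = profit n R N lam \<mu> i"
    using profit_fun_upd[OF i rivals_pos[OF i] nonneg[OF i]] by (simp add: T_def)
  finally show "profit n R N lam (\<mu>(i := m)) i \<le> profit n R N lam \<mu> i" .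
qed (fact nonneg)

lemma nash_equilibrium_share_profile:
  fixes q :: nat and lam :: "nat \<Rightarrow> real"
  defines "L \<equiv> \<Sum>j=1..q. lam j"
  assumes "2 \<le> q" "q \<le> n" "0 < R * N"
    and active: "\<And>i. i \<in> {1..q} \<Longrightarrow> 0 < lam i \<and> (real q - 1) * lam i < L"
    and inactive: "\<And>i. i \<in> {q<..n} \<Longrightarrow> L \<le> (real q - 1) * lam i"
  shows "nash_equilibrium n R N lam
    (\<lambda>i. if i \<le> q then R * N * (real q - 1) / L * (1 - (real q - 1) * lam i / L) else 0)"
proof -
  define c where "c = R * N * (real q - 1) / L"
  define \<mu> where "\<mu> = (\<lambda>i. if i \<le> q then c * (1 - (real q - 1) * lam i / L) else 0)"
  have q1: "0 < real q - 1"
    using \<open>2 \<le> q\<close> by simp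
  have L: "0 < L"
    unfolding L_def using \<open>2 \<le> q\<close> active by (intro sum_pos) auto
  have c: "0 < c"
    using \<open>0 < R * N\<close> q1 L by (simp add: c_def)
  have total: "(\<Sum>j=1..n. \<mu> j) = c"
  proof -
    have "(\<Sum>j=1..n. \<mu> j) = c * (\<Sum>j=1..q. 1 - (real q - 1) / L * lam j)"
      using \<open>q \<le> n\<close> unfolding sum_distrib_left
      by (intro sum.mono_neutral_cong_right) (auto simp: \<mu>_def)
    also have "\<dots> = c * (real q - (real q - 1) / L * L)"
      unfolding sum_subtractf sum_distrib_left[symmetric] L_def by simp
    also have "\<dots> = c"
      using L by (simp add: field_simps)
    finally show ?thesis .
  qed
  have profile: "0 \<le> \<mu> i \<and> 0 \<le> lam i \<and> 0 < (\<Sum>j=1..n. \<mu> j) - \<mu> i \<and>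
      (R * N * ((\<Sum>j=1..n. \<mu> j) - \<mu> i) = lam i * (\<Sum>j=1..n. \<mu> j)\<^sup>2 \<or>
       \<mu> i = 0 \<and> R * N \<le> lam i * (\<Sum>j=1..n. \<mu> j))"
    if i: "i \<in> {1..n}" for i
  proof (cases "i \<le> q")
    case True
    then have "0 < lam i" "(real q - 1) * lam i / L < 1"
      using active[of i] i L by auto
    have \<mu>_i: "\<mu> i = c * (1 - (real q - 1) * lam i / L)"
      using True by (simp add: \<mu>_def)
    have rivals: "c - \<mu> i = c * (real q - 1) * lam i / L"
      unfolding \<mu>_i by (simp add: right_diff_distrib)
    have "R * N * (c - \<mu> i) = lam i * c\<^sup>2"
      unfolding rivals by (simp add: c_def power2_eq_square)
    moreover have "0 \<le> \<mu> i" "0 < c - \<mu> i"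
      using \<mu>_i rivals c q1 L \<open>0 < lam i\<close> \<open>(real q - 1) * lam i / L < 1\<close> by simp_all
    ultimately show ?thesis
      using \<open>0 < lam i\<close> unfolding total by simp
  next
    case False
    then have "L \<le> (real q - 1) * lam i"
      using inactive i by auto
    then have "0 < lam i"
      using L q1 by (smt (verit) zero_less_mult_iff)
    have "R * N * L \<le> R * N * ((real q - 1) * lam i)"
      using \<open>L \<le> (real q - 1) * lam i\<close> \<open>0 < R * N\<close> by (intro mult_left_mono) simp_all
    then have "R * N \<le> lam i * c"
      using L by (simp add: c_def field_simps)
    moreover have "\<mu> i = 0"
      using False by (simp add: \<mu>_def)
    ultimately show ?thesis
      using c \<open>0 < lam i\<close> unfolding total by simp
  qed
  have "nash_equilibrium n R N lam \<mu>"
    by (rule nash_equilibriumI_first_order) (use profile in blast)+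
  then show ?thesis
    unfolding \<mu>_def c_def .
qed

declare q_loop.simps [simp del] \<comment> \<open>the recursive equation would unfold forever\<close>

lemma q_loop_continue:
  "q < n \<Longrightarrow> lam (q + 1) < (\<Sum>i=1..q. lam i) / (real q - 1) \<Longrightarrow> q_loop n lam q = q_loop n lam (q + 1)"
  by (subst q_loop.simps) simp

lemma q_loop_halt:
  assumes "\<not> (q < n \<and> lam (q + 1) < (\<Sum>i=1..q. lam i) / (real q - 1))"
  shows "q_loop n lam q = q"
  by (subst q_loop.simps) (rule if_not_P[OF assms])

lemma q_loop_ge: "q \<le> q_loop n lam q"
proof (induction n lam q rule: q_loop.induct)
  case (1 n lam q)
  then show ?case
    by (cases "q < n \<and> lam (q + 1) < (\<Sum>i=1..q. lam i) / (real q - 1)")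
      (simp_all add: q_loop_continue q_loop_halt)
qed

lemma q_loop_le: "q \<le> n \<Longrightarrow> q_loop n lam q \<le> n"
proof (induction n lam q rule: q_loop.induct)
  case (1 n lam q)
  then show ?case
    by (cases "q < n \<and> lam (q + 1) < (\<Sum>i=1..q. lam i) / (real q - 1)")
      (simp_all add: q_loop_continue q_loop_halt)
qed

lemma q_loop_stops:
  "q_loop n lam q < n \<Longrightarrow>
    \<not> lam (q_loop n lam q + 1) < (\<Sum>i=1..q_loop n lam q. lam i) / (real (q_loop n lam q) - 1)"
proof (induction n lam q rule: q_loop.induct)
  case (1 n lam q)
  then show ?case
    by (cases "q < n \<and> lam (q + 1) < (\<Sum>i=1..q. lam i) / (real q - 1)")
      (simp_all add: q_loop_continue q_loop_halt)
qed

lemma q_loop_last_step: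
  "q \<le> k \<Longrightarrow> q_loop n lam q = k + 1 \<Longrightarrow> lam (k + 1) < (\<Sum>i=1..k. lam i) / (real k - 1)"
proof (induction n lam q rule: q_loop.induct)
  case (1 n lam q)
  show ?case
  proof (cases "q < n \<and> lam (q + 1) < (\<Sum>i=1..q. lam i) / (real q - 1)")
    case True
    then show ?thesis
      using "1.IH" "1.prems" q_loop_continue[of q n lam] by (cases "q = k") auto
  next
    case False
    then show ?thesis
      using "1.prems" q_loop_halt[OF False] by simp
  qed
qed

lemma q_of_ge_2: "2 \<le> q_of n lam"
  unfolding q_of_def by (rule q_loop_ge)

lemma q_of_le: "2 \<le> n \<Longrightarrow> q_of n lam \<le> n"
  unfolding q_of_def by (rule q_loop_le)

lemma q_of_last_active:
  assumes "0 < lam 1"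
  shows "(real (q_of n lam) - 1) * lam (q_of n lam) < (\<Sum>i=1..q_of n lam. lam i)"
proof (cases "q_of n lam = 2")
  case True
  then show ?thesis
    using assms by (simp add: numeral_2_eq_2)
next
  case False
  define k where "k = q_of n lam - 1"
  have k: "q_of n lam = k + 1" "2 \<le> k"
    using False q_of_ge_2[of n lam] by (simp_all add: k_def)
  then have "lam (k + 1) < (\<Sum>i=1..k. lam i) / (real k - 1)"
    using q_loop_last_step[of 2 k n lam] by (simp add: q_of_def)
  then have "(real k - 1) * lam (k + 1) < (\<Sum>i=1..k. lam i)"
    using k(2) by (simp add: field_simps)
  then show ?thesis
    using k(1) by (simp add: algebra_simps)
qed

lemma q_of_stops:
  assumes "q_of n lam < n"
  shows "(\<Sum>i=1..q_of n lam. lam i) \<le> (real (q_of n lam) - 1) * lam (q_of n lam + 1)"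
proof -
  have "0 < real (q_of n lam) - 1"
    using q_of_ge_2[of n lam] by simp
  then show ?thesis
    using q_loop_stops[of n lam 2] assms by (simp add: q_of_def field_simps)
qed

lemma q_of_active:
  assumes "2 \<le> n" and pos: "\<And>i. i \<in> {1..n} \<Longrightarrow> 0 < lam i"
    and mono: "\<And>i j. i \<in> {1..n} \<Longrightarrow> j \<in> {1..n} \<Longrightarrow> i \<le> j \<Longrightarrow> lam i \<le> lam j"
    and i: "i \<in> {1..q_of n lam}"
  shows "0 < lam i \<and> (real (q_of n lam) - 1) * lam i < (\<Sum>j=1..q_of n lam. lam j)"
proof -
  have q: "2 \<le> q_of n lam" "q_of n lam \<le> n"
    using q_of_ge_2 q_of_le \<open>2 \<le> n\<close> by auto
  have "(real (q_of n lam) - 1) * lam i \<le> (real (q_of n lam) - 1) * lam (q_of n lam)"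
    using i q mono[of i "q_of n lam"] by (intro mult_left_mono) auto
  also have "\<dots> < (\<Sum>j=1..q_of n lam. lam j)"
    using q_of_last_active pos \<open>2 \<le> n\<close> by auto
  finally show ?thesis
    using i q pos by auto
qed

lemma q_of_inactive:
  assumes mono: "\<And>i j. i \<in> {1..n} \<Longrightarrow> j \<in> {1..n} \<Longrightarrow> i \<le> j \<Longrightarrow> lam i \<le> lam j"
    and i: "i \<in> {q_of n lam<..n}"
  shows "(\<Sum>j=1..q_of n lam. lam j) \<le> (real (q_of n lam) - 1) * lam i"
proof -
  have "(\<Sum>j=1..q_of n lam. lam j) \<le> (real (q_of n lam) - 1) * lam (q_of n lam + 1)"
    using i q_of_stops[of n lam] by auto
  also have "\<dots> \<le> (real (q_of n lam) - 1) * lam i"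
    using i q_of_ge_2[of n lam] mono[of "q_of n lam + 1" i] by (intro mult_left_mono) auto
  finally show ?thesis .
qed

theorem theorem2:
  fixes n :: nat and R N :: real and lam :: "nat \<Rightarrow> real"
  assumes "n \<ge> 2" and "R > 0" and "N > 0"
    and "\<And>i. i \<in> {1..n} \<Longrightarrow> lam i > 0"
    and "\<And>i j. i \<in> {1..n} \<Longrightarrow> j \<in> {1..n} \<Longrightarrow> i \<le> j \<Longrightarrow> lam i \<le> lam j"
  shows "nash_equilibrium n R N lam (mu_star n R N lam)"
proof -
  define q where "q = q_of n lam"
  define L where "L = (\<Sum>j=1..q. lam j)"
  have "mu_star n R N lam =
      (\<lambda>i. if i \<le> q then R * N * (real q - 1) / L * (1 - (real q - 1) * lam i / L) else 0)"
    by (simp add: mu_star_def Let_def q_def L_def fun_eq_iff)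
  moreover have "nash_equilibrium n R N lam
      (\<lambda>i. if i \<le> q then R * N * (real q - 1) / L * (1 - (real q - 1) * lam i / L) else 0)"
    unfolding L_def q_def
  proof (rule nash_equilibrium_share_profile)
    show "2 \<le> q_of n lam" "q_of n lam \<le> n" "0 < R * N"
      using q_of_ge_2 q_of_le assms(1-3) by auto
  qed (use q_of_active[of n lam, OF assms(1,4,5)] q_of_inactive[of n lam, OF assms(5)] in auto)
  ultimately show ?thesis by simp
qed

end
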